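(* Let $F$ and $G$ be topological groups with $F$ Hausdorff, and let $\mathcal R(F,G)$ be the space of continuous homomorphisms $F\to G$ with the compact-open topology. Then the maps $E:\mathcal R(F,G)\to\mathrm{Map}^\bullet(EF,EG)$, $\phi\mapsto E\phi$, and $B:\mathcal R(F,G)\to\mathrm{Map}^\bullet(BF,BG)$, $\phi\mapsto B\phi$, are continuous, where the target spaces of pointed continuous maps carry the compact-open topology.
   Context: For a topological group $P$, Milnor's $EP$ consists of sequences $(t_jp_j)_{j\in\mathbb N}$ with $t_j\in[0,1]$ (finitely many nonzero, summing to 1), $p_j\in P$ (with $p_j$ irrelevant when $t_j=0$); it carries the coarsest topology making continuous the maps $\tau_i((t_jp_j))=t_i$ and $\gamma_i:\tau_i^{-1}(]0,1])\to P$, $\gamma_i((t_jp_j))=p_i$. $P$ acts on the right by $(t_jp_j)\cdot p=(t_jp_jp)$, $BP=EP/P$; base point of $EP$ is $(1e,0,0,\dots)$ and of $BP$ its image. For $\phi:F\to G$, $E\phi((t_jf_j))=(t_j\phi(f_j))$ and $B\phi$ is the induced map $BF\to BG$. *)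

theory Defs
  imports "HOL-Analysis.Analysis"
begin

definition topological_group ::
  "'a topology \<Rightarrow> ('a \<Rightarrow> 'a \<Rightarrow> 'a) \<Rightarrow> ('a \<Rightarrow> 'a) \<Rightarrow> 'a \<Rightarrow> bool" where
  "topological_group X m i e \<longleftrightarrow>
     e \<in> topspace X \<and>
     (\<forall>x\<in>topspace X. \<forall>y\<in>topspace X. m x y \<in> topspace X) \<and>
     (\<forall>x\<in>topspace X. i x \<in> topspace X) \<and>
     (\<forall>x\<in>topspace X. \<forall>y\<in>topspace X. \<forall>z\<in>topspace X. m (m x y) z = m x (m y z)) \<and>
     (\<forall>x\<in>topspace X. m e x = x \<and> m x e = x) \<and>
     (\<forall>x\<in>topspace X. m (i x) x = e \<and> m x (i x) = e) \<and>
     continuous_map (prod_topology X X) X (\<lambda>(x, y). m x y) \<and>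
     continuous_map X X i"

definition cont_hom ::
  "'a topology \<Rightarrow> ('a \<Rightarrow> 'a \<Rightarrow> 'a) \<Rightarrow> 'b topology \<Rightarrow> ('b \<Rightarrow> 'b \<Rightarrow> 'b) \<Rightarrow> ('a \<Rightarrow> 'b) \<Rightarrow> bool" where
  "cont_hom X m Y n \<phi> \<longleftrightarrow> continuous_map X Y \<phi> \<and>
     (\<forall>x\<in>topspace X. \<forall>y\<in>topspace X. \<phi> (m x y) = n (\<phi> x) (\<phi> y))"

text \<open>The compact-open topology on the set of continuous maps X \<rightarrow> Y, generated by the
  subbasic sets {f. f ` K \<subseteq> U} (K compact in X, U open in Y).  Taking K = {} gives the
  whole space of continuous maps, so the topspace is exactly the continuous maps.\<close>

definition compact_open :: "'a topology \<Rightarrow> 'b topology \<Rightarrow> ('a \<Rightarrow> 'b) topology" where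
  "compact_open X Y = topology_generated_by
     {{f. continuous_map X Y f \<and> f ` K \<subseteq> U} | K U. compactin X K \<and> openin Y U}"

definition pointed_maps_co ::
  "'a topology \<Rightarrow> 'a \<Rightarrow> 'b topology \<Rightarrow> 'b \<Rightarrow> ('a \<Rightarrow> 'b) topology" where
  "pointed_maps_co X x0 Y y0 = subtopology (compact_open X Y) {f. f x0 = y0}"

definition hom_space ::
  "'a topology \<Rightarrow> ('a \<Rightarrow> 'a \<Rightarrow> 'a) \<Rightarrow> 'b topology \<Rightarrow> ('b \<Rightarrow> 'b \<Rightarrow> 'b) \<Rightarrow> ('a \<Rightarrow> 'b) topology" where
  "hom_space X m Y n = subtopology (compact_open X Y) {\<phi>. cont_hom X m Y n \<phi>}"

text \<open>A point (t_j p_j) of EP is represented by a pair (t, p).  Since p_j is irrelevant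
  when t_j = 0, we use the normal form p_j = e whenever t_j = 0.\<close>

definition milnor_E_set :: "'a topology \<Rightarrow> 'a \<Rightarrow> ((nat \<Rightarrow> real) \<times> (nat \<Rightarrow> 'a)) set" where
  "milnor_E_set X e = {(t, p). (\<forall>j. 0 \<le> t j \<and> t j \<le> 1) \<and> finite {j. t j \<noteq> 0} \<and>
      (\<Sum>j\<in>{j. t j \<noteq> 0}. t j) = 1 \<and>
      (\<forall>j. t j \<noteq> 0 \<longrightarrow> p j \<in> topspace X) \<and> (\<forall>j. t j = 0 \<longrightarrow> p j = e)}"

text \<open>Coarsest topology making \<tau>_i : EP \<rightarrow> [0,1] and \<gamma>_i : \<tau>_i^{-1}(]0,1]) \<rightarrow> P continuous.\<close>

definition milnor_E :: "'a topology \<Rightarrow> 'a \<Rightarrow> ((nat \<Rightarrow> real) \<times> (nat \<Rightarrow> 'a)) topology" where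
  "milnor_E X e = topology_generated_by
     ({{x \<in> milnor_E_set X e. fst x i \<in> U} | i U. open U} \<union>
      {{x \<in> milnor_E_set X e. 0 < fst x i \<and> snd x i \<in> V} | i V. openin X V})"

definition milnor_E_base :: "'a \<Rightarrow> (nat \<Rightarrow> real) \<times> (nat \<Rightarrow> 'a)" where
  "milnor_E_base e = ((\<lambda>j. if j = 0 then 1 else 0), (\<lambda>j. e))"

definition milnor_act ::
  "('a \<Rightarrow> 'a \<Rightarrow> 'a) \<Rightarrow> 'a \<Rightarrow> (nat \<Rightarrow> real) \<times> (nat \<Rightarrow> 'a) \<Rightarrow> 'a \<Rightarrow> (nat \<Rightarrow> real) \<times> (nat \<Rightarrow> 'a)" where
  "milnor_act m e x g = (fst x, (\<lambda>j. if fst x j = 0 then e else m (snd x j) g))"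

definition milnor_orbit :: "'a topology \<Rightarrow> ('a \<Rightarrow> 'a \<Rightarrow> 'a) \<Rightarrow> 'a \<Rightarrow>
    (nat \<Rightarrow> real) \<times> (nat \<Rightarrow> 'a) \<Rightarrow> ((nat \<Rightarrow> real) \<times> (nat \<Rightarrow> 'a)) set" where
  "milnor_orbit X m e x = {milnor_act m e x g | g. g \<in> topspace X}"

definition milnor_B_set :: "'a topology \<Rightarrow> ('a \<Rightarrow> 'a \<Rightarrow> 'a) \<Rightarrow> 'a \<Rightarrow>
    ((nat \<Rightarrow> real) \<times> (nat \<Rightarrow> 'a)) set set" where
  "milnor_B_set X m e = milnor_orbit X m e ` milnor_E_set X e"

text \<open>BP = EP/P with the quotient topology: a set U of orbits is open iff the union of
  its orbits (its preimage under the projection) is open in EP.\<close>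

definition milnor_B :: "'a topology \<Rightarrow> ('a \<Rightarrow> 'a \<Rightarrow> 'a) \<Rightarrow> 'a \<Rightarrow>
    ((nat \<Rightarrow> real) \<times> (nat \<Rightarrow> 'a)) set topology" where
  "milnor_B X m e = topology (\<lambda>U. U \<subseteq> milnor_B_set X m e \<and> openin (milnor_E X e) (\<Union>U))"

definition milnor_B_base :: "'a topology \<Rightarrow> ('a \<Rightarrow> 'a \<Rightarrow> 'a) \<Rightarrow> 'a \<Rightarrow>
    ((nat \<Rightarrow> real) \<times> (nat \<Rightarrow> 'a)) set" where
  "milnor_B_base X m e = milnor_orbit X m e (milnor_E_base e)"

definition milnor_E_map :: "('a \<Rightarrow> 'b) \<Rightarrow> (nat \<Rightarrow> real) \<times> (nat \<Rightarrow> 'a) \<Rightarrow> (nat \<Rightarrow> real) \<times> (nat \<Rightarrow> 'b)" where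
  "milnor_E_map \<phi> x = (fst x, \<phi> \<circ> snd x)"

definition milnor_B_map :: "'b topology \<Rightarrow> ('b \<Rightarrow> 'b \<Rightarrow> 'b) \<Rightarrow> 'b \<Rightarrow> ('a \<Rightarrow> 'b) \<Rightarrow>
    ((nat \<Rightarrow> real) \<times> (nat \<Rightarrow> 'a)) set \<Rightarrow> ((nat \<Rightarrow> real) \<times> (nat \<Rightarrow> 'b)) set" where
  "milnor_B_map Y n e' \<phi> Q = milnor_orbit Y n e' (milnor_E_map \<phi> (SOME x. x \<in> Q))"

end

theory Submission
  imports Defs
begin

text \<open>Each E\<phi> and B\<phi> is continuous and pointed, so it suffices to show that
  \<phi> \<mapsto> E\<phi> and \<phi> \<mapsto> B\<phi> are continuous into the compact-open topology.
  By the tube lemma this follows once the adjoint maps (\<phi>, x) \<mapsto> E\<phi> x and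
  (\<phi>, Q) \<mapsto> B\<phi> Q are continuous on R(F,G) \<times> K for every compact K.

  For EP, continuity is tested on the coordinates t_i and p_i. Only (\<phi>, x) \<mapsto> \<phi>(p_i x) on
  {t_i > 0} is non-trivial: near a point where t_i \<ge> c > 0, the p_i x with x \<in> K range over
  a compact subset of F, and evaluation R(F,G) \<times> C \<rightarrow> G is continuous for compact C
  because F is Hausdorff. For BP one works over the open sets {t_j > 0}: translating the j-th
  group coordinate to e is constant on orbits, which gives a continuous local section
  s_j of EP \<rightarrow> BP, and there B\<phi> is the projection of E\<phi> \<circ> s_j.\<close>

section \<open>The compact-open topology\<close>

lemma topspace_compact_open [simp]: "topspace (compact_open X Y) = {f. continuous_map X Y f}"
proof -
  have "{f. continuous_map X Y f \<and> f ` {} \<subseteq> topspace Y} \<in>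
      {{f. continuous_map X Y f \<and> f ` K \<subseteq> U} | K U. compactin X K \<and> openin Y U}"
    by blast
  then show ?thesis
    unfolding compact_open_def topology_generated_by_topspace by auto
qed

lemma openin_compact_open:
  "compactin X K \<Longrightarrow> openin Y U \<Longrightarrow>
     openin (compact_open X Y) {f. continuous_map X Y f \<and> f ` K \<subseteq> U}"
  unfolding compact_open_def by (rule topology_generated_by_Basis) blast

lemma topspace_hom_space: "topspace (hom_space X m Y n) = {\<phi>. cont_hom X m Y n \<phi>}"
  unfolding hom_space_def cont_hom_def by auto

lemma continuous_map_into_pointed_maps_co:
  assumes "continuous_map T (compact_open X Y) F" and "\<And>a. a \<in> topspace T \<Longrightarrow> F a x0 = y0"
  shows "continuous_map T (pointed_maps_co X x0 Y y0) F"
  unfolding pointed_maps_co_def using assms by (auto intro: continuous_map_into_subtopology)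

lemma Hausdorff_compactin_neighbourhood_base:
  assumes "Hausdorff_space X" and "compactin X C" and "openin X W" and "x \<in> W \<inter> C"
  obtains U L where "openin X U" "x \<in> U" "compactin X L" "U \<inter> C \<subseteq> L" "L \<subseteq> W"
proof -
  let ?Y = "subtopology X C"
  have "locally_compact_space ?Y"
    using assms(2) by (simp add: compact_imp_locally_compact_space compact_space_subtopology)
  moreover have "Hausdorff_space ?Y"
    using assms(1) by (rule Hausdorff_space_subtopology)
  ultimately have "neighbourhood_base_of (compactin ?Y) ?Y"
    using locally_compact_kc_space[of ?Y] by blast
  moreover have "openin ?Y (C \<inter> W)"
    using assms(3) by (rule openin_subtopology_Int2)
  ultimately obtain V L where "openin ?Y V" "compactin ?Y L" "x \<in> V" "V \<subseteq> L" "L \<subseteq> C \<inter> W"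
    using assms(4) unfolding neighbourhood_base_of by (metis IntD1 IntD2 IntI)
  moreover then obtain U where "openin X U" "V = U \<inter> C"
    by (auto simp: openin_subtopology)
  ultimately show thesis
    using that by (auto simp: compactin_subtopology)
qed

text \<open>Evaluation need not be jointly continuous on C(X,Y) \<times> X, but it is on C(X,Y) \<times> C for
  compact C in a Hausdorff space X. This is where the Hausdorff hypothesis on F is used.\<close>

lemma continuous_map_eval_compact_open:
  assumes X: "Hausdorff_space X" and C: "compactin X C"
  shows "continuous_map (prod_topology (compact_open X Y) (subtopology X C)) Y (\<lambda>(f, x). f x)"
  unfolding continuous_map
proof (intro conjI allI impI)
  let ?P = "prod_topology (compact_open X Y) (subtopology X C)"
  show "(\<lambda>(f, x). f x) ` topspace ?P \<subseteq> topspace Y"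
    using continuous_map_image_subset_topspace by fastforce
  fix V assume V: "openin Y V"
  let ?S = "{z \<in> topspace ?P. (\<lambda>(f, x). f x) z \<in> V}"
  show "openin ?P ?S"
    unfolding openin_subopen[of ?P ?S]
  proof
    fix z assume z: "z \<in> ?S"
    then obtain f0 x0 where z0: "z = (f0, x0)" and cf0: "continuous_map X Y f0"
      and x0: "x0 \<in> topspace X" "x0 \<in> C" "f0 x0 \<in> V"
      by auto
    then have "x0 \<in> {x \<in> topspace X. f0 x \<in> V} \<inter> C"
      by blast
    then obtain U L where U: "openin X U" "x0 \<in> U" and L: "compactin X L" "U \<inter> C \<subseteq> L"
      and LV: "L \<subseteq> {x \<in> topspace X. f0 x \<in> V}"
      by (rule Hausdorff_compactin_neighbourhood_base[OF X C openin_continuous_map_preimage[OF cf0 V]])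
    let ?N = "{f. continuous_map X Y f \<and> f ` L \<subseteq> V}"
    have "openin ?P (?N \<times> (C \<inter> U))"
      using openin_compact_open[OF L(1) V] openin_subtopology_Int2[OF U(1)]
      by (simp add: openin_prod_Times_iff)
    moreover have "z \<in> ?N \<times> (C \<inter> U)"
      using z0 cf0 LV U(2) x0(2) by blast
    moreover have "?N \<times> (C \<inter> U) \<subseteq> ?S"
    proof
      fix w assume "w \<in> ?N \<times> (C \<inter> U)"
      then obtain f x where w: "w = (f, x)" "continuous_map X Y f" "f ` L \<subseteq> V" "x \<in> C" "x \<in> U"
        by blast
      moreover have "x \<in> topspace X"
        using openin_subset[OF U(1)] w(5) by blast
      ultimately show "w \<in> ?S"
        using L(2) by auto
    qed
    ultimately show "\<exists>T. openin ?P T \<and> z \<in> T \<and> T \<subseteq> ?S"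
      by blast
  qed
qed

lemma openin_compact_image_subset:
  assumes F: "continuous_map (prod_topology T (subtopology X K)) Y (\<lambda>(a, x). F a x)"
    and K: "compactin X K" and W: "openin Y W"
  shows "openin T {a \<in> topspace T. F a ` K \<subseteq> W}"
  unfolding openin_subopen[of T "{a \<in> topspace T. F a ` K \<subseteq> W}"]
proof
  fix a assume a: "a \<in> {a \<in> topspace T. F a ` K \<subseteq> W}"
  let ?P = "prod_topology T (subtopology X K)"
  let ?W = "{z \<in> topspace ?P. (\<lambda>(a, x). F a x) z \<in> W}"
  have W': "openin ?P ?W"
    using openin_continuous_map_preimage[OF F W] .
  have K': "compactin (subtopology X K) K"
    using K by (simp add: compactin_subtopology)
  have aK: "{a} \<times> K \<subseteq> ?W"
    using a compactin_subset_topspace[OF K] by auto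
  obtain N V where N: "openin T N" "a \<in> N" and NV: "K \<subseteq> V" "N \<times> V \<subseteq> ?W"
    using tube_lemma_right[OF W' K' _ aK] a by auto
  have "N \<subseteq> {a \<in> topspace T. F a ` K \<subseteq> W}"
  proof
    fix b assume b: "b \<in> N"
    have "(b, x) \<in> ?W" if "x \<in> K" for x
      using NV b that by blast
    then show "b \<in> {a \<in> topspace T. F a ` K \<subseteq> W}"
      using openin_subset[OF N(1)] b by auto
  qed
  then show "\<exists>N. openin T N \<and> a \<in> N \<and> N \<subseteq> {a \<in> topspace T. F a ` K \<subseteq> W}"
    using N by blast
qed

lemma continuous_map_into_compact_open:
  assumes cont: "\<And>a. a \<in> topspace T \<Longrightarrow> continuous_map X Y (F a)"
    and adjoint: "\<And>K. compactin X K \<Longrightarrow>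
          continuous_map (prod_topology T (subtopology X K)) Y (\<lambda>(a, x). F a x)"
  shows "continuous_map T (compact_open X Y) F"
  unfolding compact_open_def
proof (rule continuous_on_generated_topo)
  fix S assume "S \<in> {{f. continuous_map X Y f \<and> f ` K \<subseteq> U} | K U. compactin X K \<and> openin Y U}"
  then obtain K W where K: "compactin X K" and W: "openin Y W"
    and S: "S = {f. continuous_map X Y f \<and> f ` K \<subseteq> W}"
    by blast
  have "F -` S \<inter> topspace T = {a \<in> topspace T. F a ` K \<subseteq> W}"
    unfolding S using cont by blast
  then show "openin T (F -` S \<inter> topspace T)"
    using openin_compact_image_subset[OF adjoint[OF K] K W] by simp
next
  show "F ` topspace T \<subseteq>
      \<Union> {{f. continuous_map X Y f \<and> f ` K \<subseteq> U} | K U. compactin X K \<and> openin Y U}"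
    using cont topspace_compact_open[of X Y]
    unfolding compact_open_def topology_generated_by_topspace by blast
qed

lemma prod_topology_subtopology_mono:
  "S \<subseteq> C \<Longrightarrow> prod_topology T (subtopology X S) =
     subtopology (prod_topology T (subtopology X C)) (topspace T \<times> S)"
  by (simp add: prod_topology_subtopology subtopology_subtopology Times_Int_Times Int_absorb1)

lemma subtopology_prod_topology_snd:
  "subtopology (prod_topology T (subtopology X K)) {z. P (snd z)} =
     prod_topology T (subtopology X (K \<inter> {x. P x}))"
proof -
  have "topspace T \<times> K \<inter> {z. P (snd z)} = topspace T \<times> (K \<inter> {x. P x})"
    by auto
  then show ?thesis
    by (simp add: prod_topology_subtopology subtopology_subtopology)
qed

lemma continuous_map_prod_subtopology_locally:
  assumes "\<And>x. x \<in> K \<Longrightarrow> \<exists>U C. openin X U \<and> x \<in> U \<and> K \<inter> U \<subseteq> C \<and>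
             continuous_map (prod_topology T (subtopology X C)) Y f"
  shows "continuous_map (prod_topology T (subtopology X K)) Y f"
proof -
  define I where "I = {U. openin X U \<and> (\<exists>C. K \<inter> U \<subseteq> C \<and>
              continuous_map (prod_topology T (subtopology X C)) Y f)}"
  show ?thesis
  proof (rule pasting_lemma[where I = I and T = "\<lambda>U. topspace T \<times> (K \<inter> U)" and f = "\<lambda>_. f"])
    fix U assume "U \<in> I"
    then obtain C where U: "openin X U" and C: "K \<inter> U \<subseteq> C"
      "continuous_map (prod_topology T (subtopology X C)) Y f"
      unfolding I_def by blast
    show "openin (prod_topology T (subtopology X K)) (topspace T \<times> (K \<inter> U))"
      using U by (simp add: openin_prod_Times_iff openin_subtopology_Int2)
    have "subtopology (prod_topology T (subtopology X K)) (topspace T \<times> (K \<inter> U)) =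
        subtopology (prod_topology T (subtopology X C)) (topspace T \<times> (K \<inter> U))"
      using prod_topology_subtopology_mono[of "K \<inter> U" K T X]
        prod_topology_subtopology_mono[OF C(1), of T X]
      by simp
    then show "continuous_map
        (subtopology (prod_topology T (subtopology X K)) (topspace T \<times> (K \<inter> U))) Y f"
      using C(2) by (simp add: continuous_map_from_subtopology)
  next
    fix z assume "z \<in> topspace (prod_topology T (subtopology X K))"
    then have z: "fst z \<in> topspace T" "snd z \<in> K"
      by auto
    then obtain U C where "openin X U" "snd z \<in> U" "K \<inter> U \<subseteq> C"
      "continuous_map (prod_topology T (subtopology X C)) Y f"
      using assms by blast
    then have "U \<in> I" and "z \<in> topspace T \<times> (K \<inter> U)"
      using z unfolding I_def by (auto simp: mem_Times_iff)
    then show "\<exists>U. U \<in> I \<and> z \<in> topspace T \<times> (K \<inter> U) \<and> f z = f z"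
      by blast
  qed simp
qed

lemma continuous_map_prod_subtopology_positive:
  assumes f: "continuous_map X euclideanreal f" and K: "compactin X K"
    and cont: "\<And>C. compactin X C \<Longrightarrow> C \<subseteq> {x. 0 < f x} \<Longrightarrow>
          continuous_map (prod_topology T (subtopology X C)) Y g"
  shows "continuous_map (prod_topology T (subtopology X (K \<inter> {x. 0 < f x}))) Y g"
proof (rule continuous_map_prod_subtopology_locally)
  fix x0 assume x0: "x0 \<in> K \<inter> {x. 0 < f x}"
  define c where "c = f x0 / 2"
  have c: "0 < c" "c < f x0"
    using x0 unfolding c_def by auto
  let ?U = "{x \<in> topspace X. f x \<in> {c<..}}"
  let ?C = "K \<inter> {x \<in> topspace X. f x \<in> {c..}}"
  have "openin X ?U"
    by (rule openin_continuous_map_preimage[OF f]) simp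
  moreover have "x0 \<in> ?U"
    using x0 c compactin_subset_topspace[OF K] by auto
  moreover have "closedin X {x \<in> topspace X. f x \<in> {c..}}"
    by (rule closedin_continuous_map_preimage[OF f]) simp
  then have "compactin X ?C"
    by (rule compact_Int_closedin[OF K])
  moreover have "?C \<subseteq> {x. 0 < f x}" and "K \<inter> {x. 0 < f x} \<inter> ?U \<subseteq> ?C"
    using c by auto
  ultimately show "\<exists>U C. openin X U \<and> x0 \<in> U \<and> K \<inter> {x. 0 < f x} \<inter> U \<subseteq> C \<and>
      continuous_map (prod_topology T (subtopology X C)) Y g"
    using cont by blast
qed

lemma continuous_map_prod_subtopology_compose:
  assumes adjoint: "\<And>C. compactin X' C \<Longrightarrow>
          continuous_map (prod_topology T (subtopology X' C)) Y (\<lambda>(a, y). F a y)"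
    and g: "continuous_map (subtopology X A) X' g" and K: "compactin X K" "K \<subseteq> A"
  shows "continuous_map (prod_topology T (subtopology X K)) Y (\<lambda>(a, x). F a (g x))"
proof -
  have gK: "continuous_map (subtopology X K) X' g"
    using continuous_map_from_subtopology_mono[OF g K(2)] .
  then have "compactin X' (g ` K)"
    by (rule image_compactin[rotated]) (simp add: K(1) compactin_subtopology)
  moreover have "continuous_map (prod_topology T (subtopology X K))
      (prod_topology T (subtopology X' (g ` K))) (\<lambda>(a, x). (a, g x))"
    using gK by (auto simp: continuous_map_prod_top continuous_map_in_subtopology)
  ultimately have "continuous_map (prod_topology T (subtopology X K)) Y
      ((\<lambda>(a, y). F a y) \<circ> (\<lambda>(a, x). (a, g x)))"
    using adjoint continuous_map_compose by blast
  then show ?thesis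
    by (simp add: o_def split_def)
qed

section \<open>Milnor's construction\<close>

lemma topspace_milnor_E [simp]: "topspace (milnor_E X e) = milnor_E_set X e"
  unfolding milnor_E_def topology_generated_by_topspace by blast

lemma openin_milnor_E_tau:
  "open U \<Longrightarrow> openin (milnor_E X e) {x \<in> milnor_E_set X e. fst x i \<in> U}"
  unfolding milnor_E_def by (rule topology_generated_by_Basis) blast

lemma openin_milnor_E_gamma:
  "openin X V \<Longrightarrow> openin (milnor_E X e) {x \<in> milnor_E_set X e. 0 < fst x i \<and> snd x i \<in> V}"
  unfolding milnor_E_def by (rule topology_generated_by_Basis) blast

lemma continuous_map_milnor_tau: "continuous_map (milnor_E X e) euclideanreal (\<lambda>x. fst x i)"
  unfolding continuous_map using openin_milnor_E_tau by (auto simp flip: open_openin)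

lemma continuous_map_milnor_gamma:
  "continuous_map (subtopology (milnor_E X e) {x. 0 < fst x i}) X (\<lambda>x. snd x i)"
  unfolding continuous_map
proof (intro conjI allI impI)
  show "(\<lambda>x. snd x i) ` topspace (subtopology (milnor_E X e) {x. 0 < fst x i}) \<subseteq> topspace X"
    by (auto simp: milnor_E_set_def)
  fix V assume "openin X V"
  have "{x \<in> topspace (subtopology (milnor_E X e) {x. 0 < fst x i}). snd x i \<in> V} =
      {x. 0 < fst x i} \<inter> {x \<in> milnor_E_set X e. 0 < fst x i \<and> snd x i \<in> V}"
    by auto
  then show "openin (subtopology (milnor_E X e) {x. 0 < fst x i})
      {x \<in> topspace (subtopology (milnor_E X e) {x. 0 < fst x i}). snd x i \<in> V}"
    using openin_subtopology_Int2[OF openin_milnor_E_gamma[OF \<open>openin X V\<close>, of e i],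
        of "{x. 0 < fst x i}"]
    by simp
qed

lemma continuous_map_into_milnor_E:
  assumes f: "f ` topspace T \<subseteq> milnor_E_set Y e"
    and tau: "\<And>i. continuous_map T euclideanreal (\<lambda>x. fst (f x) i)"
    and gamma: "\<And>i. continuous_map (subtopology T {x. 0 < fst (f x) i}) Y (\<lambda>x. snd (f x) i)"
  shows "continuous_map T (milnor_E Y e) f"
  unfolding milnor_E_def
proof (rule continuous_on_generated_topo)
  fix W assume "W \<in> {{x \<in> milnor_E_set Y e. fst x i \<in> U} |i U. open U} \<union>
      {{x \<in> milnor_E_set Y e. 0 < fst x i \<and> snd x i \<in> V} |i V. openin Y V}"
  then show "openin T (f -` W \<inter> topspace T)"
  proof
    assume "W \<in> {{x \<in> milnor_E_set Y e. fst x i \<in> U} |i U. open U}"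
    then obtain i U where U: "open U" "W = {x \<in> milnor_E_set Y e. fst x i \<in> U}"
      by blast
    then have "f -` W \<inter> topspace T = {x \<in> topspace T. fst (f x) i \<in> U}"
      using f by auto
    moreover have "openin T {x \<in> topspace T. fst (f x) i \<in> U}"
      by (rule openin_continuous_map_preimage[OF tau]) (simp add: U(1))
    ultimately show ?thesis
      by simp
  next
    assume "W \<in> {{x \<in> milnor_E_set Y e. 0 < fst x i \<and> snd x i \<in> V} |i V. openin Y V}"
    then obtain i V where V: "openin Y V" "W = {x \<in> milnor_E_set Y e. 0 < fst x i \<and> snd x i \<in> V}"
      by blast
    let ?D = "{x \<in> topspace T. 0 < fst (f x) i}"
    have D: "openin T ?D"
      using openin_continuous_map_preimage[OF tau, of "{0<..}"] by simp
    have "subtopology T ?D = subtopology T {x. 0 < fst (f x) i}"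
      using subtopology_restrict[of T "{x. 0 < fst (f x) i}"] by (simp add: Collect_conj_eq)
    then have "openin (subtopology T ?D) {x \<in> topspace (subtopology T ?D). snd (f x) i \<in> V}"
      using openin_continuous_map_preimage[OF gamma V(1)] by simp
    moreover have "f -` W \<inter> topspace T = {x \<in> topspace (subtopology T ?D). snd (f x) i \<in> V}"
      using f V(2) by auto
    ultimately show ?thesis
      using openin_trans_full[OF _ D] by simp
  qed
next
  show "f ` topspace T \<subseteq> \<Union> ({{x \<in> milnor_E_set Y e. fst x i \<in> U} |i U. open U} \<union>
      {{x \<in> milnor_E_set Y e. 0 < fst x i \<and> snd x i \<in> V} |i V. openin Y V})"
    using f topspace_milnor_E[of Y e]
    unfolding milnor_E_def topology_generated_by_topspace by simp
qed

type_synonym 'a milnor_point = "(nat \<Rightarrow> real) \<times> (nat \<Rightarrow> 'a)"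

locale topgroup =
  fixes X :: "'a topology" and m :: "'a \<Rightarrow> 'a \<Rightarrow> 'a" and i :: "'a \<Rightarrow> 'a" and e :: 'a
  assumes topological_group: "topological_group X m i e"
begin

lemma e_closed: "e \<in> topspace X"
  and m_closed: "x \<in> topspace X \<Longrightarrow> y \<in> topspace X \<Longrightarrow> m x y \<in> topspace X"
  and i_closed: "x \<in> topspace X \<Longrightarrow> i x \<in> topspace X"
  and m_assoc: "x \<in> topspace X \<Longrightarrow> y \<in> topspace X \<Longrightarrow> z \<in> topspace X \<Longrightarrow>
      m (m x y) z = m x (m y z)"
  and l_one: "x \<in> topspace X \<Longrightarrow> m e x = x" and r_one: "x \<in> topspace X \<Longrightarrow> m x e = x"
  and l_inv: "x \<in> topspace X \<Longrightarrow> m (i x) x = e" and r_inv: "x \<in> topspace X \<Longrightarrow> m x (i x) = e"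
  and continuous_map_m: "continuous_map (prod_topology X X) X (\<lambda>(x, y). m x y)"
  and continuous_map_i: "continuous_map X X i"
  using topological_group unfolding topological_group_def by auto

lemma m_i_m:
  assumes "x \<in> topspace X" "g \<in> topspace X"
  shows "m g (i (m x g)) = i x"
proof -
  have xg: "m x g \<in> topspace X"
    using assms m_closed by auto
  have "m x (m g (i (m x g))) = e"
    using m_assoc[OF assms i_closed[OF xg]] r_inv[OF xg] by simp
  then have "m (i x) (m x (m g (i (m x g)))) = i x"
    using r_one i_closed assms by simp
  then show ?thesis
    using m_assoc[of "i x" x] assms i_closed m_closed l_inv l_one xg by metis
qed

abbreviation "EP \<equiv> milnor_E X e"
abbreviation "ES \<equiv> milnor_E_set X e"
abbreviation "BP \<equiv> milnor_B X m e"
abbreviation "BS \<equiv> milnor_B_set X m e"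
abbreviation "act \<equiv> milnor_act m e"
abbreviation "orb \<equiv> milnor_orbit X m e"

lemma mem_ES_iff: "x \<in> ES \<longleftrightarrow> (\<forall>j. 0 \<le> fst x j \<and> fst x j \<le> 1) \<and> finite {j. fst x j \<noteq> 0} \<and>
      (\<Sum>j\<in>{j. fst x j \<noteq> 0}. fst x j) = 1 \<and>
      (\<forall>j. fst x j \<noteq> 0 \<longrightarrow> snd x j \<in> topspace X) \<and> (\<forall>j. fst x j = 0 \<longrightarrow> snd x j = e)"
  by (cases x) (simp add: milnor_E_set_def)

lemma ES_snd_closed: "x \<in> ES \<Longrightarrow> fst x j \<noteq> 0 \<Longrightarrow> snd x j \<in> topspace X"
  unfolding mem_ES_iff by blast

lemma ES_ex_pos:
  assumes "x \<in> ES"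
  obtains j where "0 < fst x j"
proof -
  have "{j. fst x j \<noteq> 0} \<noteq> {}"
    using assms unfolding mem_ES_iff by force
  then obtain j where "fst x j \<noteq> 0"
    by blast
  moreover have "0 \<le> fst x j"
    using assms unfolding mem_ES_iff by blast
  ultimately show thesis
    using that by (simp add: less_le)
qed

lemma milnor_E_base_in_ES: "milnor_E_base e \<in> ES"
proof -
  have "{j. (if j = 0 then 1 else 0) \<noteq> (0::real)} = {0}"
    by auto
  then show ?thesis
    using e_closed by (simp add: milnor_E_base_def milnor_E_set_def)
qed

lemma fst_act [simp]: "fst (act x g) = fst x"
  by (simp add: milnor_act_def)

lemma snd_act: "snd (act x g) j = (if fst x j = 0 then e else m (snd x j) g)"
  by (simp add: milnor_act_def)

lemma act_in_ES: "x \<in> ES \<Longrightarrow> g \<in> topspace X \<Longrightarrow> act x g \<in> ES"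
  using m_closed unfolding mem_ES_iff by (auto simp: snd_act)

lemma act_act:
  "x \<in> ES \<Longrightarrow> g \<in> topspace X \<Longrightarrow> h \<in> topspace X \<Longrightarrow> act (act x g) h = act x (m g h)"
  using m_assoc unfolding mem_ES_iff by (auto simp: milnor_act_def)

lemma act_e: "x \<in> ES \<Longrightarrow> act x e = x"
  using r_one unfolding mem_ES_iff by (auto simp: milnor_act_def prod_eq_iff)

lemma orb_self: "x \<in> ES \<Longrightarrow> x \<in> orb x"
  unfolding milnor_orbit_def using act_e e_closed by (metis (mono_tags, lifting) mem_Collect_eq)

lemma orb_subset_ES: "x \<in> ES \<Longrightarrow> orb x \<subseteq> ES"
  unfolding milnor_orbit_def using act_in_ES by blast

lemma fst_orb: "y \<in> orb x \<Longrightarrow> fst y = fst x"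
  unfolding milnor_orbit_def by auto

lemma orb_act:
  assumes "x \<in> ES" "g \<in> topspace X"
  shows "orb (act x g) = orb x"
proof
  show "orb (act x g) \<subseteq> orb x"
    unfolding milnor_orbit_def using act_act assms m_closed by blast
  show "orb x \<subseteq> orb (act x g)"
  proof
    fix y assume "y \<in> orb x"
    then obtain h where h: "h \<in> topspace X" "y = act x h"
      unfolding milnor_orbit_def by auto
    have "m g (m (i g) h) = h"
      using m_assoc[of g "i g" h] assms h r_inv l_one i_closed by simp
    then have "act (act x g) (m (i g) h) = y"
      using act_act assms h i_closed m_closed by metis
    then show "y \<in> orb (act x g)"
      unfolding milnor_orbit_def using h assms i_closed m_closed by blast
  qed
qed

lemma orb_eq:
  assumes "x \<in> ES" "y \<in> orb x"
  shows "orb y = orb x"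
proof -
  obtain g where "g \<in> topspace X" "y = act x g"
    using assms(2) unfolding milnor_orbit_def by blast
  then show ?thesis
    using orb_act assms(1) by blast
qed

lemma some_orb:
  assumes "x \<in> ES"
  obtains g where "g \<in> topspace X" "(SOME y. y \<in> orb x) = act x g"
proof -
  have "(SOME y. y \<in> orb x) \<in> orb x"
    using orb_self[OF assms] by (rule someI)
  then show thesis
    using that unfolding milnor_orbit_def by blast
qed

lemma BS_mem:
  assumes "Q \<in> BS" "z \<in> Q"
  shows "z \<in> ES" and "orb z = Q"
proof -
  obtain x where x: "x \<in> ES" "Q = orb x"
    using assms(1) unfolding milnor_B_set_def by blast
  show "z \<in> ES"
    using orb_subset_ES x assms(2) by blast
  show "orb z = Q"
    using orb_eq x assms(2) by blast
qed

lemma orb_in_BS: "x \<in> ES \<Longrightarrow> orb x \<in> BS"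
  unfolding milnor_B_set_def by blast

lemma Union_eq_orb_preimage: "U \<subseteq> BS \<Longrightarrow> \<Union>U = {x \<in> ES. orb x \<in> U}"
  using orb_self by (auto dest: BS_mem)

lemma Union_BS: "\<Union>BS = ES"
  using Union_eq_orb_preimage[of BS] orb_in_BS by auto

lemma openin_milnor_B: "openin BP U \<longleftrightarrow> U \<subseteq> BS \<and> openin EP (\<Union>U)"
proof -
  have "istopology (\<lambda>U. U \<subseteq> BS \<and> openin EP (\<Union>U))"
    unfolding istopology_def
  proof (rule conjI; intro allI impI)
    fix S T assume "S \<subseteq> BS \<and> openin EP (\<Union>S)" "T \<subseteq> BS \<and> openin EP (\<Union>T)"
    moreover from this have "\<Union>(S \<inter> T) = \<Union>S \<inter> \<Union>T"
      using Union_eq_orb_preimage[of S] Union_eq_orb_preimage[of T]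
        Union_eq_orb_preimage[of "S \<inter> T"] by auto
    ultimately show "S \<inter> T \<subseteq> BS \<and> openin EP (\<Union>(S \<inter> T))"
      by auto
  next
    fix \<K> assume "\<forall>S\<in>\<K>. S \<subseteq> BS \<and> openin EP (\<Union>S)"
    moreover have "\<Union>(\<Union>\<K>) = \<Union>(Union ` \<K>)"
      by blast
    ultimately show "\<Union>\<K> \<subseteq> BS \<and> openin EP (\<Union>(\<Union>\<K>))"
      by auto
  qed
  then show ?thesis
    unfolding milnor_B_def by simp
qed

lemma topspace_milnor_B [simp]: "topspace BP = BS"
proof
  show "topspace BP \<subseteq> BS"
    using openin_milnor_B openin_topspace by blast
  have "openin BP BS"
    unfolding openin_milnor_B Union_BS using openin_topspace[of EP] by simp
  then show "BS \<subseteq> topspace BP"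
    by (rule openin_subset)
qed

lemma continuous_map_milnor_orbit: "continuous_map EP BP orb"
  unfolding continuous_map
proof (intro conjI allI impI)
  show "orb ` topspace EP \<subseteq> topspace BP"
    using orb_in_BS by auto
  fix U assume "openin BP U"
  then show "openin EP {x \<in> topspace EP. orb x \<in> U}"
    using Union_eq_orb_preimage openin_milnor_B by auto
qed

lemma continuous_map_from_milnor_B_subtopology:
  assumes S: "openin BP S" and h: "continuous_map (subtopology EP (\<Union>S)) Z (\<lambda>x. h (orb x))"
  shows "continuous_map (subtopology BP S) Z h"
  unfolding continuous_map
proof (intro conjI allI impI)
  have SB: "S \<subseteq> BS" and US: "openin EP (\<Union>S)"
    using S openin_milnor_B by auto
  show "h ` topspace (subtopology BP S) \<subseteq> topspace Z"
  proof clarify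
    fix Q assume "Q \<in> topspace (subtopology BP S)"
    then have "Q \<in> BS" "Q \<in> S"
      by auto
    then obtain x where "x \<in> ES" "Q = orb x" "Q \<in> S"
      unfolding milnor_B_set_def by blast
    moreover from this have "x \<in> \<Union>S"
      using orb_self by blast
    ultimately have "x \<in> topspace (subtopology EP (\<Union>S))"
      by simp
    then show "h Q \<in> topspace Z"
      using continuous_map_image_subset_topspace[OF h] \<open>Q = orb x\<close> by blast
  qed
  fix V assume "openin Z V"
  let ?R = "{Q \<in> topspace (subtopology BP S). h Q \<in> V}"
  have "\<Union>?R = {x \<in> topspace (subtopology EP (\<Union>S)). h (orb x) \<in> V}"
    using Union_eq_orb_preimage[of ?R] Union_eq_orb_preimage[OF SB] SB by auto
  then have "openin EP (\<Union>?R)"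
    using openin_trans_full[OF openin_continuous_map_preimage[OF h \<open>openin Z V\<close>] US] by simp
  then have "openin BP ?R"
    unfolding openin_milnor_B by auto
  then have "openin (subtopology BP S) (S \<inter> ?R)"
    by (rule openin_subtopology_Int2)
  moreover have "S \<inter> ?R = ?R"
    by auto
  ultimately show "openin (subtopology BP S) ?R"
    by simp
qed

lemma continuous_map_from_milnor_B:
  assumes "continuous_map EP Z (\<lambda>x. h (orb x))"
  shows "continuous_map BP Z h"
proof -
  have "subtopology EP (\<Union>(topspace BP)) = EP"
    by (metis Union_BS subtopology_topspace topspace_milnor_B topspace_milnor_E)
  then have "continuous_map (subtopology BP (topspace BP)) Z h"
    using assms by (intro continuous_map_from_milnor_B_subtopology[OF openin_topspace]) simp
  then show ?thesis
    by (simp only: subtopology_topspace)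
qed

definition orbit_tau :: "nat \<Rightarrow> 'a milnor_point set \<Rightarrow> real"
  where "orbit_tau j Q = fst (SOME x. x \<in> Q) j"

lemma orbit_tau_orb: "x \<in> ES \<Longrightarrow> orbit_tau j (orb x) = fst x j"
  unfolding orbit_tau_def using fst_orb orb_self by (metis someI)

lemma continuous_map_orbit_tau: "continuous_map BP euclideanreal (orbit_tau j)"
proof (rule continuous_map_from_milnor_B)
  show "continuous_map EP euclideanreal (\<lambda>x. orbit_tau j (orb x))"
    using continuous_map_milnor_tau by (rule continuous_map_eq) (simp add: orbit_tau_orb)
qed

text \<open>normalize j is constant on orbits, so it descends to a continuous section of
  EP \<rightarrow> BP over the open set where the j-th barycentric coordinate is positive.\<close>

definition normalize :: "nat \<Rightarrow> 'a milnor_point \<Rightarrow> 'a milnor_point"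
  where "normalize j x = act x (i (snd x j))"

lemma fst_normalize [simp]: "fst (normalize j x) = fst x"
  by (simp add: normalize_def)

lemma normalize_in_orb:
  assumes "x \<in> ES" "fst x j \<noteq> 0"
  shows "normalize j x \<in> orb x"
  unfolding normalize_def milnor_orbit_def using assms ES_snd_closed i_closed by blast

lemma normalize_act:
  assumes x: "x \<in> ES" and g: "g \<in> topspace X" and j: "fst x j \<noteq> 0"
  shows "normalize j (act x g) = normalize j x"
proof -
  have p: "snd x j \<in> topspace X"
    using ES_snd_closed x j by blast
  have "normalize j (act x g) = act (act x g) (i (m (snd x j) g))"
    using j by (simp add: normalize_def snd_act)
  also have "\<dots> = act x (m g (i (m (snd x j) g)))"
    using act_act x g i_closed m_closed p by blast
  also have "\<dots> = normalize j x"
    unfolding normalize_def using m_i_m[OF p g] by simp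
  finally show ?thesis .
qed

lemma continuous_map_normalize:
  "continuous_map (subtopology EP {x. 0 < fst x j}) EP (normalize j)"
proof (rule continuous_map_into_milnor_E)
  let ?T = "subtopology EP {x. 0 < fst x j}"
  show "normalize j ` topspace ?T \<subseteq> ES"
    unfolding normalize_def using act_in_ES ES_snd_closed i_closed by force
  fix k
  show "continuous_map ?T euclideanreal (\<lambda>x. fst (normalize j x) k)"
    by (simp add: continuous_map_from_subtopology continuous_map_milnor_tau)
  let ?Tk = "subtopology EP ({x. 0 < fst x j} \<inter> {x. 0 < fst x k})"
  have pk: "continuous_map ?Tk X (\<lambda>x. snd x k)" and pj: "continuous_map ?Tk X (\<lambda>x. snd x j)"
    by (rule continuous_map_from_subtopology_mono[OF continuous_map_milnor_gamma]; blast)+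
  have "continuous_map ?Tk X (\<lambda>x. i (snd x j))"
    using continuous_map_compose[OF pj continuous_map_i] by (simp add: o_def)
  with pk have "continuous_map ?Tk (prod_topology X X) (\<lambda>x. (snd x k, i (snd x j)))"
    by (rule continuous_map_pairedI)
  then have "continuous_map ?Tk X (\<lambda>x. m (snd x k) (i (snd x j)))"
    using continuous_map_compose[OF _ continuous_map_m] by (fastforce simp: o_def)
  moreover have "snd (normalize j x) k = m (snd x k) (i (snd x j))" if "x \<in> topspace ?Tk" for x
    using that by (simp add: normalize_def snd_act)
  ultimately show "continuous_map (subtopology ?T {x. 0 < fst (normalize j x) k}) X
      (\<lambda>x. snd (normalize j x) k)"
    by (auto simp: subtopology_subtopology intro: continuous_map_eq)
qed

definition orbit_section :: "nat \<Rightarrow> 'a milnor_point set \<Rightarrow> 'a milnor_point"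
  where "orbit_section j Q = normalize j (SOME x. x \<in> Q)"

lemma orbit_section_orb:
  assumes "x \<in> ES" "fst x j \<noteq> 0"
  shows "orbit_section j (orb x) = normalize j x"
proof -
  obtain g where "g \<in> topspace X" "(SOME y. y \<in> orb x) = act x g"
    using some_orb[OF assms(1)] .
  then show ?thesis
    unfolding orbit_section_def using normalize_act assms by simp
qed

lemma continuous_map_orbit_section:
  "continuous_map (subtopology BP {Q. 0 < orbit_tau j Q}) EP (orbit_section j)"
proof -
  let ?S = "{Q \<in> topspace BP. orbit_tau j Q \<in> {0<..}}"
  have S: "openin BP ?S"
    by (rule openin_continuous_map_preimage[OF continuous_map_orbit_tau]) simp
  have "\<Union>?S = {x \<in> ES. 0 < fst x j}"
    using Union_eq_orb_preimage[of ?S] orb_in_BS orbit_tau_orb by auto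
  then have "subtopology EP (\<Union>?S) = subtopology EP {x. 0 < fst x j}"
    using subtopology_restrict[of EP "{x. 0 < fst x j}"] by (simp add: Collect_conj_eq)
  then have "continuous_map (subtopology EP (\<Union>?S)) EP (\<lambda>x. orbit_section j (orb x))"
    using continuous_map_normalize[of j] orbit_section_orb by (auto intro: continuous_map_eq)
  then have "continuous_map (subtopology BP ?S) EP (orbit_section j)"
    by (rule continuous_map_from_milnor_B_subtopology[OF S])
  moreover have "subtopology BP ?S = subtopology BP {Q. 0 < orbit_tau j Q}"
    using subtopology_restrict[of BP "{Q. 0 < orbit_tau j Q}"] by (simp add: Collect_conj_eq)
  ultimately show ?thesis
    by simp
qed

end

section \<open>Continuity of E and B\<close>

lemma fst_milnor_E_map [simp]: "fst (milnor_E_map \<phi> x) = fst x"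
  by (simp add: milnor_E_map_def)

lemma snd_milnor_E_map [simp]: "snd (milnor_E_map \<phi> x) j = \<phi> (snd x j)"
  by (simp add: milnor_E_map_def)

lemma cont_hom_closed: "cont_hom X m Y n \<phi> \<Longrightarrow> x \<in> topspace X \<Longrightarrow> \<phi> x \<in> topspace Y"
  unfolding cont_hom_def continuous_map_def by blast

lemma cont_hom_m:
  "cont_hom X m Y n \<phi> \<Longrightarrow> x \<in> topspace X \<Longrightarrow> y \<in> topspace X \<Longrightarrow> \<phi> (m x y) = n (\<phi> x) (\<phi> y)"
  unfolding cont_hom_def by blast

locale topgroup_pair = F: topgroup XF mF iF eF + G: topgroup XG mG iG eG
  for XF :: "'a topology" and mF iF eF and XG :: "'b topology" and mG iG eG
begin

abbreviation "HS \<equiv> hom_space XF mF XG mG"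

lemma cont_hom_e:
  assumes \<phi>: "cont_hom XF mF XG mG \<phi>"
  shows "\<phi> eF = eG"
proof -
  let ?a = "\<phi> eF"
  have a: "?a \<in> topspace XG"
    using cont_hom_closed[OF \<phi> F.e_closed] .
  have "eG = mG (iG ?a) ?a"
    using G.l_inv[OF a] by simp
  also have "\<dots> = mG (iG ?a) (mG ?a ?a)"
    using cont_hom_m[OF \<phi> F.e_closed F.e_closed] F.l_one[OF F.e_closed] by simp
  also have "\<dots> = mG (mG (iG ?a) ?a) ?a"
    using G.m_assoc G.i_closed a by simp
  also have "\<dots> = ?a"
    using G.l_inv G.l_one a by simp
  finally show ?thesis
    by simp
qed

lemma milnor_E_map_in_ES:
  "cont_hom XF mF XG mG \<phi> \<Longrightarrow> x \<in> F.ES \<Longrightarrow> milnor_E_map \<phi> x \<in> G.ES"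
  using cont_hom_e cont_hom_closed[of XF mF XG mG \<phi>] unfolding F.mem_ES_iff G.mem_ES_iff by auto

lemma milnor_E_map_act:
  assumes \<phi>: "cont_hom XF mF XG mG \<phi>" and x: "x \<in> F.ES" and g: "g \<in> topspace XF"
  shows "milnor_E_map \<phi> (F.act x g) = G.act (milnor_E_map \<phi> x) (\<phi> g)"
proof -
  have "snd (milnor_E_map \<phi> (F.act x g)) j = snd (G.act (milnor_E_map \<phi> x) (\<phi> g)) j" for j
    using F.ES_snd_closed[OF x] g cont_hom_e[OF \<phi>] cont_hom_m[OF \<phi>] by (simp add: F.snd_act G.snd_act)
  then show ?thesis
    by (simp add: prod_eq_iff fun_eq_iff)
qed

lemma milnor_E_map_base:
  "cont_hom XF mF XG mG \<phi> \<Longrightarrow> milnor_E_map \<phi> (milnor_E_base eF) = milnor_E_base eG"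
  using cont_hom_e by (simp add: milnor_E_map_def milnor_E_base_def o_def)

lemma continuous_map_milnor_E_map:
  assumes \<phi>: "cont_hom XF mF XG mG \<phi>"
  shows "continuous_map F.EP G.EP (milnor_E_map \<phi>)"
proof (rule continuous_map_into_milnor_E)
  show "milnor_E_map \<phi> ` topspace F.EP \<subseteq> G.ES"
    using milnor_E_map_in_ES[OF \<phi>] by auto
  fix k
  show "continuous_map F.EP euclideanreal (\<lambda>x. fst (milnor_E_map \<phi> x) k)"
    by (simp add: continuous_map_milnor_tau)
  have "continuous_map XF XG \<phi>"
    using \<phi> unfolding cont_hom_def by blast
  then show "continuous_map (subtopology F.EP {x. 0 < fst (milnor_E_map \<phi> x) k}) XG
      (\<lambda>x. snd (milnor_E_map \<phi> x) k)"
    using continuous_map_compose[OF continuous_map_milnor_gamma] by (simp add: o_def)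
qed

lemma milnor_B_map_orb:
  assumes \<phi>: "cont_hom XF mF XG mG \<phi>" and x: "x \<in> F.ES"
  shows "milnor_B_map XG mG eG \<phi> (F.orb x) = G.orb (milnor_E_map \<phi> x)"
proof -
  obtain g where g: "g \<in> topspace XF" "(SOME y. y \<in> F.orb x) = F.act x g"
    using F.some_orb[OF x] .
  then have "milnor_B_map XG mG eG \<phi> (F.orb x) = G.orb (G.act (milnor_E_map \<phi> x) (\<phi> g))"
    unfolding milnor_B_map_def using milnor_E_map_act[OF \<phi> x] by simp
  also have "\<dots> = G.orb (milnor_E_map \<phi> x)"
    using G.orb_act milnor_E_map_in_ES[OF \<phi> x] cont_hom_closed[OF \<phi> g(1)] by blast
  finally show ?thesis .
qed

lemma milnor_B_map_base:
  "cont_hom XF mF XG mG \<phi> \<Longrightarrow>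
     milnor_B_map XG mG eG \<phi> (milnor_B_base XF mF eF) = milnor_B_base XG mG eG"
  unfolding milnor_B_base_def using milnor_B_map_orb F.milnor_E_base_in_ES milnor_E_map_base by simp

lemma continuous_map_milnor_B_map:
  assumes \<phi>: "cont_hom XF mF XG mG \<phi>"
  shows "continuous_map F.BP G.BP (milnor_B_map XG mG eG \<phi>)"
proof (rule F.continuous_map_from_milnor_B)
  have "continuous_map F.EP G.BP (G.orb \<circ> milnor_E_map \<phi>)"
    using continuous_map_milnor_E_map[OF \<phi>] G.continuous_map_milnor_orbit
    by (rule continuous_map_compose)
  then show "continuous_map F.EP G.BP (\<lambda>x. milnor_B_map XG mG eG \<phi> (F.orb x))"
    by (rule continuous_map_eq) (simp add: milnor_B_map_orb[OF \<phi>])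
qed

lemma continuous_map_milnor_E_map_adjoint:
  assumes Haus: "Hausdorff_space XF" and K: "compactin F.EP K"
  shows "continuous_map (prod_topology HS (subtopology F.EP K)) G.EP (\<lambda>(\<phi>, x). milnor_E_map \<phi> x)"
proof (rule continuous_map_into_milnor_E)
  let ?P = "prod_topology HS (subtopology F.EP K)"
  have KE: "K \<subseteq> F.ES"
    using compactin_subset_topspace[OF K] by simp
  show "(\<lambda>(\<phi>, x). milnor_E_map \<phi> x) ` topspace ?P \<subseteq> G.ES"
    using KE milnor_E_map_in_ES by (auto simp: topspace_hom_space)
  fix k
  have "continuous_map ?P euclideanreal ((\<lambda>x. fst x k) \<circ> snd)"
    by (intro continuous_map_compose[OF continuous_map_snd] continuous_map_from_subtopology
        continuous_map_milnor_tau)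
  then show "continuous_map ?P euclideanreal (\<lambda>z. fst ((\<lambda>(\<phi>, x). milnor_E_map \<phi> x) z) k)"
    by (simp add: o_def split_def)
  let ?A = "{x. 0 < fst x k}"
  have eval: "continuous_map (prod_topology HS (subtopology XF C)) XG (\<lambda>(\<phi>, y). \<phi> y)"
    if "compactin XF C" for C
    unfolding hom_space_def prod_topology_subtopology(1)
    by (rule continuous_map_from_subtopology[OF continuous_map_eval_compact_open[OF Haus that]])
  have "continuous_map (prod_topology HS (subtopology F.EP (K \<inter> ?A))) XG (\<lambda>(\<phi>, x). \<phi> (snd x k))"
    using continuous_map_milnor_tau K
  proof (rule continuous_map_prod_subtopology_positive)
    fix C assume "compactin F.EP C" "C \<subseteq> ?A"
    then show "continuous_map (prod_topology HS (subtopology F.EP C)) XG (\<lambda>(\<phi>, x). \<phi> (snd x k))"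
      using continuous_map_prod_subtopology_compose[where F = "\<lambda>\<phi> y. \<phi> y" and g = "\<lambda>x. snd x k",
          OF eval continuous_map_milnor_gamma]
      by blast
  qed
  then show "continuous_map (subtopology ?P {z. 0 < fst ((\<lambda>(\<phi>, x). milnor_E_map \<phi> x) z) k}) XG
      (\<lambda>z. snd ((\<lambda>(\<phi>, x). milnor_E_map \<phi> x) z) k)"
    using subtopology_prod_topology_snd[of HS F.EP K "\<lambda>x. 0 < fst x k"] by (simp add: split_def)
qed

lemma milnor_B_map_orbit_section:
  assumes \<phi>: "cont_hom XF mF XG mG \<phi>" and Q: "Q \<in> F.BS" "0 < F.orbit_tau j Q"
  shows "milnor_B_map XG mG eG \<phi> Q = G.orb (milnor_E_map \<phi> (F.orbit_section j Q))"
proof -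
  obtain x where x: "x \<in> F.ES" "Q = F.orb x"
    using Q(1) unfolding milnor_B_set_def by blast
  then have "fst x j \<noteq> 0"
    using Q(2) F.orbit_tau_orb by fastforce
  then have "F.normalize j x \<in> F.orb x" and "F.orbit_section j Q = F.normalize j x"
    using F.normalize_in_orb F.orbit_section_orb x by auto
  then have "F.normalize j x \<in> F.ES" and "F.orb (F.normalize j x) = Q"
    and "F.orbit_section j Q = F.normalize j x"
    using F.orb_subset_ES[OF x(1)] F.orb_eq[OF x(1)] x(2) by auto
  then show ?thesis
    using milnor_B_map_orb[OF \<phi>] by metis
qed

lemma continuous_map_milnor_B_map_adjoint_section:
  assumes Haus: "Hausdorff_space XF"
    and C: "compactin F.BP C" "C \<subseteq> {Q. 0 < F.orbit_tau j Q}"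
  shows "continuous_map (prod_topology HS (subtopology F.BP C)) G.BP
           (\<lambda>(\<phi>, Q). milnor_B_map XG mG eG \<phi> Q)"
proof -
  have "continuous_map (prod_topology HS (subtopology F.EP K)) G.BP
      (\<lambda>(\<phi>, y). G.orb (milnor_E_map \<phi> y))" if "compactin F.EP K" for K
    using continuous_map_compose[OF continuous_map_milnor_E_map_adjoint[OF Haus that]
        G.continuous_map_milnor_orbit]
    by (simp add: o_def split_def)
  then have "continuous_map (prod_topology HS (subtopology F.BP C)) G.BP
      (\<lambda>(\<phi>, Q). G.orb (milnor_E_map \<phi> (F.orbit_section j Q)))"
    using continuous_map_prod_subtopology_compose[
        where F = "\<lambda>\<phi> y. G.orb (milnor_E_map \<phi> y)" and g = "F.orbit_section j",
        OF _ F.continuous_map_orbit_section C]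
    by blast
  then show ?thesis
    by (rule continuous_map_eq)
      (use C compactin_subset_topspace[OF C(1)] in
        \<open>auto simp: topspace_hom_space milnor_B_map_orbit_section\<close>)
qed

lemma continuous_map_milnor_B_map_adjoint:
  assumes Haus: "Hausdorff_space XF" and K: "compactin F.BP K"
  shows "continuous_map (prod_topology HS (subtopology F.BP K)) G.BP
           (\<lambda>(\<phi>, Q). milnor_B_map XG mG eG \<phi> Q)"
proof (rule continuous_map_prod_subtopology_locally)
  fix Q0 assume "Q0 \<in> K"
  then have "Q0 \<in> F.BS"
    using compactin_subset_topspace[OF K] by auto
  then obtain x0 where x0: "x0 \<in> F.ES" "Q0 = F.orb x0"
    unfolding milnor_B_set_def by blast
  obtain j where j: "0 < fst x0 j"
    using F.ES_ex_pos[OF x0(1)] .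
  let ?U = "{Q \<in> topspace F.BP. F.orbit_tau j Q \<in> {0<..}}"
  have "openin F.BP ?U"
    by (rule openin_continuous_map_preimage[OF F.continuous_map_orbit_tau]) simp
  moreover have "Q0 \<in> ?U"
    using x0 j F.orbit_tau_orb F.orb_in_BS by auto
  moreover have "K \<inter> ?U \<subseteq> K \<inter> {Q. 0 < F.orbit_tau j Q}"
    by auto
  moreover have "continuous_map (prod_topology HS (subtopology F.BP (K \<inter> {Q. 0 < F.orbit_tau j Q})))
      G.BP (\<lambda>(\<phi>, Q). milnor_B_map XG mG eG \<phi> Q)"
    using F.continuous_map_orbit_tau K continuous_map_milnor_B_map_adjoint_section[OF Haus]
    by (rule continuous_map_prod_subtopology_positive)
  ultimately show "\<exists>U C. openin F.BP U \<and> Q0 \<in> U \<and> K \<inter> U \<subseteq> C \<and>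
      continuous_map (prod_topology HS (subtopology F.BP C)) G.BP
        (\<lambda>(\<phi>, Q). milnor_B_map XG mG eG \<phi> Q)"
    by blast
qed

lemma continuous_map_milnor_E_map_hom_space:
  assumes "Hausdorff_space XF"
  shows "continuous_map HS
           (pointed_maps_co F.EP (milnor_E_base eF) G.EP (milnor_E_base eG)) milnor_E_map"
  using assms
  by (intro continuous_map_into_pointed_maps_co continuous_map_into_compact_open
      continuous_map_milnor_E_map continuous_map_milnor_E_map_adjoint milnor_E_map_base)
     (auto simp: topspace_hom_space)

lemma continuous_map_milnor_B_map_hom_space:
  assumes "Hausdorff_space XF"
  shows "continuous_map HS
           (pointed_maps_co F.BP (milnor_B_base XF mF eF) G.BP (milnor_B_base XG mG eG))
           (milnor_B_map XG mG eG)"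
  using assms
  by (intro continuous_map_into_pointed_maps_co continuous_map_into_compact_open
      continuous_map_milnor_B_map continuous_map_milnor_B_map_adjoint milnor_B_map_base)
     (auto simp: topspace_hom_space)

end

theorem mainTheorem17:
  fixes XF :: "'a topology" and mF :: "'a \<Rightarrow> 'a \<Rightarrow> 'a" and iF :: "'a \<Rightarrow> 'a" and eF :: 'a
    and XG :: "'b topology" and mG :: "'b \<Rightarrow> 'b \<Rightarrow> 'b" and iG :: "'b \<Rightarrow> 'b" and eG :: 'b
  assumes "topological_group XF mF iF eF"
    and "topological_group XG mG iG eG"
    and "Hausdorff_space XF"
  shows "continuous_map (hom_space XF mF XG mG)
           (pointed_maps_co (milnor_E XF eF) (milnor_E_base eF) (milnor_E XG eG) (milnor_E_base eG))
           (\<lambda>\<phi>. milnor_E_map \<phi>)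
       \<and> continuous_map (hom_space XF mF XG mG)
           (pointed_maps_co (milnor_B XF mF eF) (milnor_B_base XF mF eF)
                            (milnor_B XG mG eG) (milnor_B_base XG mG eG))
           (\<lambda>\<phi>. milnor_B_map XG mG eG \<phi>)"
proof -
  interpret topgroup_pair XF mF iF eF XG mG iG eG
    using assms(1,2) by (simp add: topgroup_pair_def topgroup_def)
  show ?thesis
    using continuous_map_milnor_E_map_hom_space[OF assms(3)]
      continuous_map_milnor_B_map_hom_space[OF assms(3)]
    by simp
qed

end
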